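(* For parameters $0\le b\le1$ and $0\le c\le1$ with $bc\neq1$, let $\mathcal{N}_{b,c}$ be the qubit channel $\mathcal{N}_{b,c}(O)=K_0OK_0^\dagger+K_1OK_1^\dagger$ with (in the standard basis) $$K_0=\begin{pmatrix}\sqrt{\frac{(1+b)(1+c)}{2(1+bc)}}&0\\0&\sqrt{\frac{(1-b)(1+c)}{2(1-bc)}}\end{pmatrix},\qquad K_1=\begin{pmatrix}0&\sqrt{\frac{(1+b)(1-c)}{2(1-bc)}}\\\sqrt{\frac{(1-b)(1-c)}{2(1+bc)}}&0\end{pmatrix}.$$ If $0\le c'\le c\le1$ and $bc\neq1$, then there exists a qubit quantum channel $\mathcal{M}$ such that $\mathcal{N}_{b,c'}=\mathcal{N}_{b,c}\circ\mathcal{M}$.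
   Context: A qubit quantum channel is a completely positive trace-preserving linear map from $\mathcal{L}(\mathbb{C}^2)$ to $\mathcal{L}(\mathbb{C}^2)$. *)

theory Defs
  imports "HOL-Analysis.Analysis"
begin

type_synonym qmat = "complex^2^2"

definition adj :: "qmat \<Rightarrow> qmat" where
  "adj A = (\<chi> i j. cnj (A $ j $ i))"

definition mscale :: "complex \<Rightarrow> qmat \<Rightarrow> qmat" where
  "mscale c A = (\<chi> i j. c * A $ i $ j)"

definition clinear_map :: "(qmat \<Rightarrow> qmat) \<Rightarrow> bool" where
  "clinear_map M \<longleftrightarrow> (\<forall>A B. M (A + B) = M A + M B) \<and> (\<forall>c A. M (mscale c A) = mscale c (M A))"

text \<open>A block matrix in L(C^n \<otimes> C^2), given by its n x n array of 2x2 blocks X i j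
  (i, j < n), is positive semidefinite: <v, X v> is a nonnegative real for all v.\<close>
definition block_psd :: "nat \<Rightarrow> (nat \<Rightarrow> nat \<Rightarrow> qmat) \<Rightarrow> bool" where
  "block_psd n X \<longleftrightarrow> (\<forall>v :: nat \<Rightarrow> complex^2.
     (let q = (\<Sum>i<n. \<Sum>j<n. \<Sum>k\<in>UNIV. cnj (v i $ k) * ((X i j *v v j) $ k))
      in Im q = 0 \<and> Re q \<ge> 0))"

text \<open>Complete positivity: id_n \<otimes> M is a positive map for every n.\<close>
definition completely_positive :: "(qmat \<Rightarrow> qmat) \<Rightarrow> bool" where
  "completely_positive M \<longleftrightarrow>
     (\<forall>n X. block_psd n X \<longrightarrow> block_psd n (\<lambda>i j. M (X i j)))"

definition trace_preserving :: "(qmat \<Rightarrow> qmat) \<Rightarrow> bool" where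
  "trace_preserving M \<longleftrightarrow> (\<forall>A. trace (M A) = trace A)"

definition qubit_channel :: "(qmat \<Rightarrow> qmat) \<Rightarrow> bool" where
  "qubit_channel M \<longleftrightarrow> clinear_map M \<and> completely_positive M \<and> trace_preserving M"

definition K0 :: "real \<Rightarrow> real \<Rightarrow> qmat" where
  "K0 b c = vector [
     vector [complex_of_real (sqrt ((1+b)*(1+c) / (2*(1+b*c)))), 0],
     vector [0, complex_of_real (sqrt ((1-b)*(1+c) / (2*(1-b*c))))]]"

definition K1 :: "real \<Rightarrow> real \<Rightarrow> qmat" where
  "K1 b c = vector [
     vector [0, complex_of_real (sqrt ((1+b)*(1-c) / (2*(1-b*c))))],
     vector [complex_of_real (sqrt ((1-b)*(1-c) / (2*(1+b*c)))), 0]]"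

definition Nbc :: "real \<Rightarrow> real \<Rightarrow> qmat \<Rightarrow> qmat" where
  "Nbc b c X = K0 b c ** X ** adj (K0 b c) + K1 b c ** X ** adj (K1 b c)"

end

theory Submission
  imports Defs
begin

(* The channels N_{b,c} form a semigroup in their second parameter:
   N_{b,c r} = N_{b,c} o N_{bc,r} for 0 <= r <= 1, so M = N_{bc,c'/c} does the job.
   N_{b,c} has diagonal and antidiagonal Kraus operators, hence it mixes the two
   diagonal entries of its input by a column-stochastic 2x2 matrix and the two
   off-diagonal entries by the weights (1 +- c)/2 times s(b,c) = sqrt((1-b^2)/(1-b^2c^2)).
   The semigroup law then reduces to rational identities for the mixing weights and to
   the multiplicativity s(b,c) s(bc,r) = s(b,cr). *)

definition kraus_map :: "qmat \<Rightarrow> qmat \<Rightarrow> qmat \<Rightarrow> qmat" where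
  "kraus_map A B X = A ** X ** adj A + B ** X ** adj B"

lemma matrix_add_rdistrib: "(A + B) ** C = A ** C + B ** (C :: 'a::semiring_1^'n^'m)"
  by (vector matrix_matrix_mult_def sum.distrib[symmetric] field_simps)

lemma mscale_mult_left: "A ** mscale c X = mscale c (A ** X)"
  by (simp add: vec_eq_iff matrix_matrix_mult_def mscale_def sum_distrib_left algebra_simps)

lemma mscale_mult_right: "mscale c X ** A = mscale c (X ** A)"
  by (simp add: vec_eq_iff matrix_matrix_mult_def mscale_def sum_distrib_left algebra_simps)

lemma mscale_add: "mscale c (X + Y) = mscale c X + mscale c Y"
  by (simp add: vec_eq_iff mscale_def algebra_simps)

lemma clinear_map_kraus_map: "clinear_map (kraus_map A B)"
  unfolding clinear_map_def kraus_map_def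
  by (simp add: matrix_add_ldistrib matrix_add_rdistrib mscale_mult_left mscale_mult_right mscale_add)

lemma trace_preserving_kraus_map:
  assumes "adj A ** A + adj B ** B = mat 1"
  shows "trace_preserving (kraus_map A B)"
  unfolding trace_preserving_def
proof
  fix X
  have "trace (kraus_map A B X) = trace ((adj A ** A + adj B ** B) ** X)"
    unfolding kraus_map_def trace_add matrix_add_rdistrib
    by (metis matrix_mul_assoc trace_mul_sym)
  then show "trace (kraus_map A B X) = trace X"
    by (simp add: assms)
qed

definition cinner :: "complex^2 \<Rightarrow> complex^2 \<Rightarrow> complex" where
  "cinner u w = (\<Sum>k\<in>UNIV. cnj (u $ k) * w $ k)"

lemma cinner_add_right: "cinner u (w + w') = cinner u w + cinner u w'"
  by (simp add: cinner_def sum.distrib algebra_simps)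

lemma cinner_sandwich: "cinner u ((A ** Y ** adj A) *v w) = cinner (adj A *v u) (Y *v (adj A *v w))"
  by (simp add: cinner_def sum_2 matrix_matrix_mult_def matrix_vector_mult_def adj_def algebra_simps)

lemma completely_positive_kraus_map: "completely_positive (kraus_map A B)"
  unfolding completely_positive_def block_psd_def Let_def cinner_def[symmetric]
proof (intro allI impI)
  fix n and X :: "nat \<Rightarrow> nat \<Rightarrow> qmat" and v :: "nat \<Rightarrow> complex^2"
  let ?q = "\<lambda>w. \<Sum>i<n. \<Sum>j<n. cinner (w i) (X i j *v w j)"
  assume psd: "\<forall>w. Im (?q w) = 0 \<and> 0 \<le> Re (?q w)"
  have "(\<Sum>i<n. \<Sum>j<n. cinner (v i) (kraus_map A B (X i j) *v v j))
      = ?q (\<lambda>i. adj A *v v i) + ?q (\<lambda>i. adj B *v v i)"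
    by (simp add: kraus_map_def matrix_vector_mult_add_rdistrib cinner_add_right
          cinner_sandwich sum.distrib)
  with psd show "Im (\<Sum>i<n. \<Sum>j<n. cinner (v i) (kraus_map A B (X i j) *v v j)) = 0 \<and>
       0 \<le> Re (\<Sum>i<n. \<Sum>j<n. cinner (v i) (kraus_map A B (X i j) *v v j))"
    by simp
qed

lemma qubit_channel_kraus_map:
  "adj A ** A + adj B ** B = mat 1 \<Longrightarrow> qubit_channel (kraus_map A B)"
  unfolding qubit_channel_def
  by (simp add: clinear_map_kraus_map completely_positive_kraus_map trace_preserving_kraus_map)

definition real_diag :: "real \<Rightarrow> real \<Rightarrow> qmat" where
  "real_diag a d = vector [vector [of_real a, 0], vector [0, of_real d]]"

definition real_antidiag :: "real \<Rightarrow> real \<Rightarrow> qmat" where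
  "real_antidiag g h = vector [vector [0, of_real g], vector [of_real h, 0]]"

lemma qmat_eq_iff:
  "(X :: qmat) = Y \<longleftrightarrow> X$1$1 = Y$1$1 \<and> X$1$2 = Y$1$2 \<and> X$2$1 = Y$2$1 \<and> X$2$2 = Y$2$2"
  by (auto simp: vec_eq_iff forall_2)

lemma kraus_map_real_diag_antidiag:
  fixes a d g h :: real and X :: qmat
  defines "Y \<equiv> kraus_map (real_diag a d) (real_antidiag g h) X"
  shows "Y$1$1 = of_real (a^2) * X$1$1 + of_real (g^2) * X$2$2"
    "Y$2$2 = of_real (d^2) * X$2$2 + of_real (h^2) * X$1$1"
    "Y$1$2 = of_real (a*d) * X$1$2 + of_real (g*h) * X$2$1"
    "Y$2$1 = of_real (a*d) * X$2$1 + of_real (g*h) * X$1$2"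
  unfolding Y_def kraus_map_def real_diag_def real_antidiag_def
  by (simp_all add: adj_def matrix_matrix_mult_def sum_2 power2_eq_square algebra_simps)

lemma kraus_completeness_real_diag_antidiag:
  assumes "a^2 + h^2 = 1" "d^2 + g^2 = 1"
  shows "adj (real_diag a d) ** real_diag a d + adj (real_antidiag g h) ** real_antidiag g h = mat 1"
  using assms unfolding qmat_eq_iff real_diag_def real_antidiag_def
  by (simp add: adj_def matrix_matrix_mult_def sum_2 mat_def power2_eq_square
      flip: of_real_mult of_real_add)

definition Nbc_coherence :: "real \<Rightarrow> real \<Rightarrow> real" where
  "Nbc_coherence b c = sqrt ((1 - b^2) / (1 - (b*c)^2))"

lemma Nbc_eq_kraus_map:
  "Nbc b c = kraus_map
     (real_diag (sqrt ((1+b)*(1+c) / (2*(1+b*c)))) (sqrt ((1-b)*(1+c) / (2*(1-b*c)))))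
     (real_antidiag (sqrt ((1+b)*(1-c) / (2*(1-b*c)))) (sqrt ((1-b)*(1-c) / (2*(1+b*c)))))"
  by (simp add: fun_eq_iff Nbc_def kraus_map_def K0_def K1_def real_diag_def real_antidiag_def)

lemma sqrt_mult_sqrt_factor:
  assumes "0 \<le> t" "x * y = t^2 * z"
  shows "sqrt x * sqrt y = t * sqrt z"
proof -
  have "sqrt x * sqrt y = sqrt (t^2 * z)"
    using assms(2) by (metis real_sqrt_mult)
  also have "\<dots> = t * sqrt z"
    using assms(1) by (simp add: real_sqrt_mult)
  finally show ?thesis .
qed

lemma Nbc_kraus_entry_products:
  fixes b c :: real
  assumes "0 \<le> b" "b \<le> 1" "0 \<le> c" "c \<le> 1" "b * c < 1"
  shows "sqrt ((1+b)*(1+c) / (2*(1+b*c))) * sqrt ((1-b)*(1+c) / (2*(1-b*c)))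
      = (1+c)/2 * Nbc_coherence b c" (is ?plus)
    and "sqrt ((1+b)*(1-c) / (2*(1-b*c))) * sqrt ((1-b)*(1-c) / (2*(1+b*c)))
      = (1-c)/2 * Nbc_coherence b c" (is ?minus)
proof -
  have "0 \<le> b * c" using assms by simp
  then have pos: "0 < 1 + b*c" "0 < 1 - b*c" "0 < 1 - (b*c)^2"
    using assms(5) by (simp_all add: abs_square_less_1)
  have "(1+b)*(1+c) / (2*(1+b*c)) * ((1-b)*(1+c) / (2*(1-b*c)))
      = ((1+c)/2)^2 * ((1 - b^2) / (1 - (b*c)^2))"
    "(1+b)*(1-c) / (2*(1-b*c)) * ((1-b)*(1-c) / (2*(1+b*c)))
      = ((1-c)/2)^2 * ((1 - b^2) / (1 - (b*c)^2))"
    using pos by (simp_all add: field_simps power2_eq_square)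
  with assms pos show ?plus ?minus
    unfolding Nbc_coherence_def by (intro sqrt_mult_sqrt_factor; auto)+
qed

lemma Nbc_entries:
  fixes b c :: real and X :: qmat
  assumes "0 \<le> b" "b \<le> 1" "0 \<le> c" "c \<le> 1" "b * c < 1"
  shows "Nbc b c X $1$1 = of_real ((1+b)*(1+c) / (2*(1+b*c))) * X$1$1
                        + of_real ((1+b)*(1-c) / (2*(1-b*c))) * X$2$2"
    "Nbc b c X $2$2 = of_real ((1-b)*(1+c) / (2*(1-b*c))) * X$2$2
                    + of_real ((1-b)*(1-c) / (2*(1+b*c))) * X$1$1"
    "Nbc b c X $1$2 = of_real ((1+c)/2 * Nbc_coherence b c) * X$1$2
                    + of_real ((1-c)/2 * Nbc_coherence b c) * X$2$1"
    "Nbc b c X $2$1 = of_real ((1+c)/2 * Nbc_coherence b c) * X$2$1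
                    + of_real ((1-c)/2 * Nbc_coherence b c) * X$1$2"
  using assms mult_nonneg_nonneg[OF assms(1,3)]
  unfolding Nbc_eq_kraus_map kraus_map_real_diag_antidiag Nbc_kraus_entry_products[OF assms]
  by simp_all

lemma qubit_channel_Nbc:
  fixes b c :: real
  assumes "0 \<le> b" "b \<le> 1" "0 \<le> c" "c \<le> 1" "b * c < 1"
  shows "qubit_channel (Nbc b c)"
proof -
  have "0 \<le> b * c" using assms by simp
  then have pos: "0 < 1 + b*c" "0 < 1 - b*c"
    using assms(5) by simp_all
  have "(1+b)*(1+c) / (2*(1+b*c)) + (1-b)*(1-c) / (2*(1+b*c)) = 1"
    "(1-b)*(1+c) / (2*(1-b*c)) + (1+b)*(1-c) / (2*(1-b*c)) = 1"
    using pos by (simp_all add: add_divide_distrib[symmetric] field_simps)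
  then show ?thesis
    unfolding Nbc_eq_kraus_map using assms pos
    by (intro qubit_channel_kraus_map kraus_completeness_real_diag_antidiag) simp_all
qed

lemma Nbc_coherence_mult:
  fixes b c r :: real
  assumes "0 \<le> b" "b \<le> 1" "0 \<le> c" "b * c < 1"
  shows "Nbc_coherence b c * Nbc_coherence (b*c) r = Nbc_coherence b (c*r)"
proof -
  have "(b*c)^2 < 1" using assms by (simp add: abs_square_less_1)
  then have "(1 - b^2) / (1 - (b*c)^2) * ((1 - (b*c)^2) / (1 - (b*c*r)^2))
      = (1 - b^2) / (1 - (b*(c*r))^2)"
    by (simp add: mult.assoc)
  then show ?thesis
    unfolding Nbc_coherence_def real_sqrt_mult[symmetric] by (simp add: mult.assoc)
qed

lemma Nbc_comp:
  fixes b c r :: real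
  assumes "0 \<le> b" "b \<le> 1" "0 \<le> c" "c \<le> 1" "0 \<le> r" "r \<le> 1" "b * c < 1"
  shows "Nbc b (c*r) = Nbc b c \<circ> Nbc (b*c) r"
proof
  fix X
  have "0 \<le> b*c" "0 \<le> c*r" "0 \<le> b*c*r" "b*c*r \<le> b*c" "c*r \<le> 1"
    using assms by (simp_all add: mult_left_le mult_le_one)
  then have bc: "0 \<le> b*c" "b*c \<le> 1" "b*c*r < 1" "0 \<le> c*r" "c*r \<le> 1" "b*(c*r) < 1"
    and pos: "0 < 1 + b*c" "0 < 1 - b*c" "0 < 1 + b*c*r" "0 < 1 - b*c*r"
      "0 < 1 + b*(c*r)" "0 < 1 - b*(c*r)"
    using assms(7) by (simp_all add: mult.assoc)
  have populations:
    "(1+b)*(1+c*r) / (2*(1+b*(c*r))) = (1+b)*(1+c) / (2*(1+b*c)) * ((1+b*c)*(1+r) / (2*(1+b*c*r)))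
       + (1+b)*(1-c) / (2*(1-b*c)) * ((1-b*c)*(1-r) / (2*(1+b*c*r)))"
    "(1+b)*(1-c*r) / (2*(1-b*(c*r))) = (1+b)*(1+c) / (2*(1+b*c)) * ((1+b*c)*(1-r) / (2*(1-b*c*r)))
       + (1+b)*(1-c) / (2*(1-b*c)) * ((1-b*c)*(1+r) / (2*(1-b*c*r)))"
    "(1-b)*(1+c*r) / (2*(1-b*(c*r))) = (1-b)*(1+c) / (2*(1-b*c)) * ((1-b*c)*(1+r) / (2*(1-b*c*r)))
       + (1-b)*(1-c) / (2*(1+b*c)) * ((1+b*c)*(1-r) / (2*(1-b*c*r)))"
    "(1-b)*(1-c*r) / (2*(1+b*(c*r))) = (1-b)*(1+c) / (2*(1-b*c)) * ((1-b*c)*(1-r) / (2*(1+b*c*r)))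
       + (1-b)*(1-c) / (2*(1+b*c)) * ((1+b*c)*(1+r) / (2*(1+b*c*r)))"
    \<comment> \<open>keep \<open>2 * (1 \<plusminus> _)\<close> factored, so that \<open>divide_simps\<close> sees these denominators are nonzero\<close>
    using pos by (simp_all add: divide_simps del: distrib_left_numeral right_diff_distrib_numeral)
      (simp_all add: algebra_simps)
  have coherences:
    "(1+c*r)/2 * Nbc_coherence b (c*r) = (1+c)/2 * Nbc_coherence b c * ((1+r)/2 * Nbc_coherence (b*c) r)
       + (1-c)/2 * Nbc_coherence b c * ((1-r)/2 * Nbc_coherence (b*c) r)"
    "(1-c*r)/2 * Nbc_coherence b (c*r) = (1+c)/2 * Nbc_coherence b c * ((1-r)/2 * Nbc_coherence (b*c) r)
       + (1-c)/2 * Nbc_coherence b c * ((1+r)/2 * Nbc_coherence (b*c) r)"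
    unfolding Nbc_coherence_mult[OF assms(1-3,7), of r, symmetric] by (simp_all add: field_simps)
  show "Nbc b (c*r) X = (Nbc b c \<circ> Nbc (b*c) r) X"
    unfolding qmat_eq_iff comp_def Nbc_entries[OF assms(1,2) bc(4,5,6)]
      Nbc_entries[OF assms(1-4,7)] Nbc_entries[OF bc(1,2) assms(5,6) bc(3)]
      populations coherences
    by (simp only: of_real_add of_real_mult) algebra
qed

theorem mainTheorem6:
  fixes b c c' :: real
  assumes "0 \<le> b" "b \<le> 1" "0 \<le> c'" "c' \<le> c" "c \<le> 1" "b * c \<noteq> 1"
  shows "\<exists>M. qubit_channel M \<and> Nbc b c' = Nbc b c \<circ> M"
proof -
  define r where "r = c' / c"
  \<comment> \<open>for \<open>c = 0\<close> also \<open>c' = 0\<close>, and the junk value \<open>c' / 0 = 0\<close> is a valid choice\<close>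
  have c': "c' = c * r" and r: "0 \<le> r" "r \<le> 1"
    using assms by (auto simp: r_def divide_le_eq_1)
  have "b * c < 1"
    using assms mult_le_one[of b c] by (simp add: less_le)
  moreover have "0 \<le> b * c" "b * c * r \<le> b * c"
    using assms r by (simp_all add: mult_left_le)
  ultimately have "qubit_channel (Nbc (b * c) r)"
    using r by (intro qubit_channel_Nbc) simp_all
  moreover have "Nbc b c' = Nbc b c \<circ> Nbc (b * c) r"
    unfolding c' using assms r \<open>b * c < 1\<close> by (intro Nbc_comp) simp_all
  ultimately show ?thesis
    by blast
qed

end
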